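(* Let $\pi\in\mathcal{S}_n$, let $s$ be the position with $\pi_s=1$, let $\mathsf{D}(\pi)=\{i\in\{1,\dots,n-1\}:\pi_i>\pi_{i+1}\}$ be the descent set of $\pi$ and $d=|\mathsf{D}(\pi)|$. Then $\pi$ avoids each of the patterns $1243$, $2143$ and $231$ if and only if one of the following holds: (i) $s>d$ and $\mathsf{D}(\pi)=\{1,2,\dots,d\}$; (ii) $s\le d$, $\mathsf{D}(\pi)=\{1,2,\dots,s-1,s+1,s+2,\dots,d+1\}$, and $\pi_{s-1}>\pi_{s+1}$ if $1<s<n$.
   Context: A permutation $\pi\in\mathcal{S}_n$ avoids $\tau\in\mathcal{S}_k$ if there are no indices $i_1<\dots<i_k$ with $\pi_{i_1}\cdots\pi_{i_k}$ in the same relative order as $\tau_1\cdots\tau_k$. *)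

theory Defs
  imports Main
begin

text \<open>A permutation of [n] is represented as a list p of length n with p ! (i-1) = pi_i.\<close>
definition is_perm :: "nat \<Rightarrow> nat list \<Rightarrow> bool" where
  "is_perm n p \<longleftrightarrow> length p = n \<and> distinct p \<and> set p = {1..n}"

definition contains :: "nat list \<Rightarrow> nat list \<Rightarrow> bool" where
  "contains p tau \<longleftrightarrow> (\<exists>idx. length idx = length tau \<and> sorted_wrt (<) idx
      \<and> (\<forall>j \<in> set idx. j < length p)
      \<and> (\<forall>a < length tau. \<forall>b < length tau.
            (p ! (idx ! a) < p ! (idx ! b)) \<longleftrightarrow> (tau ! a < tau ! b)))"

definition avoids :: "nat list \<Rightarrow> nat list \<Rightarrow> bool" where
  "avoids p tau \<longleftrightarrow> \<not> contains p tau"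

definition descents :: "nat list \<Rightarrow> nat set" where
  "descents p = {i \<in> {1..length p - 1}. p ! (i - 1) > p ! i}"

end

theory Submission
  imports Defs
begin

text \<open>Let t = s - 1 be the 0-based position of the entry 1 and, unless t is the last position,
  let m be the position of the smallest entry to the right of t. Avoiding 231 forces p to decrease
  up to t and again on (t, m]: an ascent followed by a smaller entry is a 231. Avoiding 1243 forces
  p to increase from m on, since 1, p_m and a later descent form a 1243. Avoiding 231 and 2143
  together forces p_{t+1} < p_{t-1}. Conversely every permutation of this shape avoids the three
  patterns. Its descent set is {1..t} \<union> {t+2..m}, and the cases m \<le> t + 1 and m \<ge> t + 2
  are the two alternatives of the statement.\<close>

lemma contains_1243_iff:
  "contains p [1,2,4,3] \<longleftrightarrow>
    (\<exists>i j k l. i < j \<and> j < k \<and> k < l \<and> l < length p \<and> p!i < p!j \<and> p!j < p!l \<and> p!l < p!k)"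
  unfolding contains_def
  apply (intro iffI; elim exE conjE)
   apply (clarsimp simp: length_Suc_conv numeral_eq_Suc All_less_Suc, blast)
  subgoal for i j k l by (intro exI[of _ "[i,j,k,l]"]) (simp add: numeral_eq_Suc All_less_Suc)
  done

lemma contains_2143_iff:
  "contains p [2,1,4,3] \<longleftrightarrow>
    (\<exists>i j k l. i < j \<and> j < k \<and> k < l \<and> l < length p \<and> p!j < p!i \<and> p!i < p!l \<and> p!l < p!k)"
  unfolding contains_def
  apply (intro iffI; elim exE conjE)
   apply (clarsimp simp: length_Suc_conv numeral_eq_Suc All_less_Suc, blast)
  subgoal for i j k l by (intro exI[of _ "[i,j,k,l]"]) (simp add: numeral_eq_Suc All_less_Suc)
  done

lemma contains_231_iff:
  "contains p [2,3,1] \<longleftrightarrow>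
    (\<exists>i j k. i < j \<and> j < k \<and> k < length p \<and> p!k < p!i \<and> p!i < p!j)"
  unfolding contains_def
  apply (intro iffI; elim exE conjE)
   apply (clarsimp simp: length_Suc_conv numeral_eq_Suc All_less_Suc, blast)
  subgoal for i j k by (intro exI[of _ "[i,j,k]"]) (simp add: numeral_eq_Suc All_less_Suc)
  done

lemma monotone_on_atLeastAtMost_iff_Suc:
  fixes f :: "nat \<Rightarrow> 'a"
  assumes "transp R"
  shows "monotone_on {a..b} (<) R f \<longleftrightarrow> (\<forall>k. a \<le> k \<and> k < b \<longrightarrow> R (f k) (f (Suc k)))"
proof
  assume "monotone_on {a..b} (<) R f"
  then show "\<forall>k. a \<le> k \<and> k < b \<longrightarrow> R (f k) (f (Suc k))"
    by (simp add: monotone_on_def)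
next
  assume adjacent: "\<forall>k. a \<le> k \<and> k < b \<longrightarrow> R (f k) (f (Suc k))"
  show "monotone_on {a..b} (<) R f"
  proof (rule monotone_onI)
    fix i j assume "i \<in> {a..b}" "j \<in> {a..b}" "i < j"
    then have "Suc i \<le> j" "a \<le> i" "j \<le> b" by auto
    then show "R (f i) (f j)"
    proof (induction j rule: dec_induct)
      case base
      then show ?case using adjacent by simp
    next
      case (step j)
      then show ?case using adjacent assms by (meson transpD Suc_le_lessD le_trans less_imp_le)
    qed
  qed
qed

definition dec_dec_inc_shape :: "nat list \<Rightarrow> nat \<Rightarrow> nat \<Rightarrow> bool" where
  "dec_dec_inc_shape p t m \<longleftrightarrow> t \<le> m \<and> m < length p
    \<and> strict_antimono_on {..t} ((!) p)
    \<and> strict_antimono_on {t<..m} ((!) p)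
    \<and> strict_mono_on {m..<length p} ((!) p)
    \<and> (0 < t \<and> t + 2 \<le> m \<longrightarrow> p ! (t + 1) < p ! (t - 1))"

lemma dec_dec_inc_shape_iff_steps:
  "dec_dec_inc_shape p t m \<longleftrightarrow> t \<le> m \<and> m < length p
    \<and> (\<forall>k < t. p ! Suc k < p ! k)
    \<and> (\<forall>k. t < k \<and> k < m \<longrightarrow> p ! Suc k < p ! k)
    \<and> (\<forall>k. m \<le> k \<and> Suc k < length p \<longrightarrow> p ! k < p ! Suc k)
    \<and> (0 < t \<and> t + 2 \<le> m \<longrightarrow> p ! (t + 1) < p ! (t - 1))"
proof -
  have "transp (\<lambda>x y :: nat. y < x)" "transp ((<) :: nat \<Rightarrow> _)"
    by (auto intro: transpI)
  moreover have "m < length p \<Longrightarrow> {m..<length p} = {m..length p - 1}" by auto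
  ultimately show ?thesis
    unfolding dec_dec_inc_shape_def atLeast0AtMost[symmetric]
      atLeastSucAtMost_greaterThanAtMost[symmetric]
    by (auto simp: monotone_on_atLeastAtMost_iff_Suc)
qed

lemma dec_dec_inc_shapeD:
  assumes "dec_dec_inc_shape p t m"
  shows "t \<le> m" "m < length p"
    and "i < j \<Longrightarrow> j \<le> t \<Longrightarrow> p ! j < p ! i"
    and "t < i \<Longrightarrow> i < j \<Longrightarrow> j \<le> m \<Longrightarrow> p ! j < p ! i"
    and "m \<le> i \<Longrightarrow> i < j \<Longrightarrow> j < length p \<Longrightarrow> p ! i < p ! j"
    and "0 < t \<Longrightarrow> t + 2 \<le> m \<Longrightarrow> p ! (t + 1) < p ! (t - 1)"
proof -
  note shape = assms[unfolded dec_dec_inc_shape_def]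
  show "t \<le> m" "m < length p" "0 < t \<Longrightarrow> t + 2 \<le> m \<Longrightarrow> p ! (t + 1) < p ! (t - 1)"
    using shape by auto
  show "i < j \<Longrightarrow> j \<le> t \<Longrightarrow> p ! j < p ! i"
    using shape monotone_onD[of "{..t}" "(<)" "\<lambda>x y. y < x" "(!) p" i j] by auto
  show "t < i \<Longrightarrow> i < j \<Longrightarrow> j \<le> m \<Longrightarrow> p ! j < p ! i"
    using shape monotone_onD[of "{t<..m}" "(<)" "\<lambda>x y. y < x" "(!) p" i j] by auto
  show "m \<le> i \<Longrightarrow> i < j \<Longrightarrow> j < length p \<Longrightarrow> p ! i < p ! j"
    using shape monotone_onD[of "{m..<length p}" "(<)" "(<)" "(!) p" i j] by auto
qed

lemma dec_dec_inc_shape_second_run_below_first: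
  assumes "dec_dec_inc_shape p t m" "i < t" "t < j" "j \<le> m" "t + 2 \<le> m"
  shows "p ! j < p ! i"
proof -
  have "p ! (t - 1) \<le> p ! i"
    using dec_dec_inc_shapeD(3)[OF assms(1), of i "t - 1"] assms(2)
    by (cases "i = t - 1") (auto simp: less_imp_le)
  moreover have "p ! j \<le> p ! (t + 1)"
    using dec_dec_inc_shapeD(4)[OF assms(1), of "t + 1" j] assms(3,4)
    by (cases "j = t + 1") (auto simp: less_imp_le)
  ultimately show ?thesis
    using dec_dec_inc_shapeD(6)[OF assms(1)] assms(2,5) by fastforce
qed

lemma dec_dec_inc_shape_avoids_1243:
  assumes "dec_dec_inc_shape p t m"
  shows "avoids p [1,2,4,3]"
  unfolding avoids_def contains_1243_iff
proof (intro notI; elim exE conjE)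
  fix i j k l
  assume "i < j" "j < k" "k < l" "l < length p" "p!i < p!j" "p!j < p!l" "p!l < p!k"
  moreover have "t < j"
    using dec_dec_inc_shapeD(3)[OF assms, of i j] calculation by (cases "j \<le> t") auto
  moreover have "k < m"
    using dec_dec_inc_shapeD(5)[OF assms, of k l] calculation by (cases "m \<le> k") auto
  ultimately show False
    using dec_dec_inc_shapeD(4)[OF assms, of j k] by auto
qed

lemma dec_dec_inc_shape_avoids_2143:
  assumes "dec_dec_inc_shape p t m" "\<And>i. i < length p \<Longrightarrow> p ! t \<le> p ! i"
  shows "avoids p [2,1,4,3]"
  unfolding avoids_def contains_2143_iff
proof (intro notI; elim exE conjE)
  fix i j k l
  assume "i < j" "j < k" "k < l" "l < length p" "p!j < p!i" "p!i < p!l" "p!l < p!k"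
  moreover have "k < m"
    using dec_dec_inc_shapeD(5)[OF assms(1), of k l] calculation by (cases "m \<le> k") auto
  moreover have "i \<noteq> t"
    using assms(2)[of j] calculation by auto
  moreover have "t < k"
    using dec_dec_inc_shapeD(3)[OF assms(1), of i k] calculation by (cases "k \<le> t") auto
  ultimately show False
    using dec_dec_inc_shapeD(4)[OF assms(1), of i k]
      dec_dec_inc_shape_second_run_below_first[OF assms(1), of i k]
    by (cases "t < i") auto
qed

lemma dec_dec_inc_shape_avoids_231:
  assumes "dec_dec_inc_shape p t m" "\<And>i. i < length p \<Longrightarrow> p ! t \<le> p ! i"
  shows "avoids p [2,3,1]"
  unfolding avoids_def contains_231_iff
proof (intro notI; elim exE conjE)
  fix i j k
  assume "i < j" "j < k" "k < length p" "p!k < p!i" "p!i < p!j"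
  moreover have "t < j"
    using dec_dec_inc_shapeD(3)[OF assms(1), of i j] calculation by (cases "j \<le> t") auto
  moreover have "j \<le> m"
    using dec_dec_inc_shapeD(5)[OF assms(1), of j k] calculation by (cases "m \<le> j") auto
  moreover have "i \<noteq> t"
    using assms(2)[of k] calculation by auto
  moreover have "i < t"
    using dec_dec_inc_shapeD(4)[OF assms(1), of i j] calculation by (cases "t < i") auto
  ultimately show False
    using dec_dec_inc_shape_second_run_below_first[OF assms(1), of i j]
      dec_dec_inc_shapeD(5)[OF assms(1), of j k]
    by (cases "t + 2 \<le> m") auto
qed

lemma avoids_231_strict_antimono_up_to_min:
  assumes avoids: "avoids p [2,3,1]" and "distinct p" "m < length p"
    and min: "\<And>i. a \<le> i \<Longrightarrow> i < length p \<Longrightarrow> p ! m \<le> p ! i"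
  shows "strict_antimono_on {a..m} ((!) p)"
proof (rule monotone_onI)
  fix i j assume "i \<in> {a..m}" "j \<in> {a..m}" "i < j"
  then have "i < m" "j \<le> m" "a \<le> i" by auto
  show "p ! j < p ! i"
  proof (rule ccontr)
    assume "\<not> p ! j < p ! i"
    with \<open>i < j\<close> have "p ! i < p ! j"
      using nth_eq_iff_index_eq[of p i j] assms(2,3) \<open>j \<le> m\<close>
      by (auto simp: not_less order_le_less)
    moreover have "p ! m < p ! i"
      using min[of i] assms(2,3) \<open>i < m\<close> \<open>a \<le> i\<close>
      by (auto simp: nth_eq_iff_index_eq order_le_less)
    ultimately have "j < m" "p ! m < p ! i" "p ! i < p ! j"
      using \<open>j \<le> m\<close> by (auto simp: order_le_less)
    then show False
      using avoids \<open>i < j\<close> assms(3) unfolding avoids_def contains_231_iff by blast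
  qed
qed

lemma avoids_1243_strict_mono_from_min:
  assumes avoids: "avoids p [1,2,4,3]" and "distinct p" "t < m" "m < length p" "p ! t < p ! m"
    and min: "\<And>i. m \<le> i \<Longrightarrow> i < length p \<Longrightarrow> p ! m \<le> p ! i"
  shows "strict_mono_on {m..<length p} ((!) p)"
proof (rule monotone_onI)
  fix i j assume "i \<in> {m..<length p}" "j \<in> {m..<length p}" "i < j"
  then have "m \<le> i" "j < length p" by auto
  show "p ! i < p ! j"
  proof (rule ccontr)
    assume "\<not> p ! i < p ! j"
    with \<open>i < j\<close> have "p ! j < p ! i"
      using nth_eq_iff_index_eq[of p i j] assms(2) \<open>j < length p\<close>
      by (auto simp: not_less order_le_less)
    moreover have "p ! m < p ! j"
      using min[of j] assms(2,4) \<open>m \<le> i\<close> \<open>i < j\<close> \<open>j < length p\<close>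
      by (auto simp: nth_eq_iff_index_eq order_le_less)
    ultimately have "m < i"
      using min[of j] \<open>m \<le> i\<close> by (auto simp: order_le_less)
    then show False
      using avoids assms(3,5) \<open>i < j\<close> \<open>j < length p\<close> \<open>p ! j < p ! i\<close> \<open>p ! m < p ! j\<close>
      unfolding avoids_def contains_1243_iff by blast
  qed
qed

lemma avoids_231_2143_second_descent_below:
  assumes "avoids p [2,3,1]" "avoids p [2,1,4,3]" "distinct p"
    and "i < j" "j < k" "k < l" "l < length p"
    and "p ! j < p ! i" "p ! j < p ! l" "p ! l < p ! k"
  shows "p ! k < p ! i"
proof (rule ccontr)
  assume "\<not> p ! k < p ! i"
  then have "p ! i < p ! k"
    using nth_eq_iff_index_eq[of p i k] assms(3-7) by (auto simp: not_less order_le_less)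
  show False
  proof (cases "p ! l < p ! i")
    case True
    then show False
      using assms(1,4-7,10) \<open>p ! i < p ! k\<close> unfolding avoids_def contains_231_iff
      by (meson less_trans)
  next
    case False
    then have "p ! i < p ! l"
      using nth_eq_iff_index_eq[of p i l] assms(3-7) by (auto simp: not_less order_le_less)
    then show False
      using assms(2,4-8,10) unfolding avoids_def contains_2143_iff by blast
  qed
qed

lemma avoids_imp_dec_dec_inc_shape:
  assumes avoids: "avoids p [1,2,4,3]" "avoids p [2,1,4,3]" "avoids p [2,3,1]"
    and "distinct p" "t < length p" and min: "\<And>i. i < length p \<Longrightarrow> p ! t \<le> p ! i"
  obtains m where "dec_dec_inc_shape p t m"
proof -
  have min_strict: "p ! t < p ! i" if "i < length p" "i \<noteq> t" for i
    using min[OF that(1)] nth_eq_iff_index_eq[of p i t] assms(4,5) that by auto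
  have run1: "strict_antimono_on {..t} ((!) p)"
    using avoids_231_strict_antimono_up_to_min[OF avoids(3) assms(4,5), of 0] min
    by (simp add: atLeast0AtMost)
  show thesis
  proof (cases "Suc t = length p")
    case True
    then have "dec_dec_inc_shape p t t"
      using run1 by (auto simp: dec_dec_inc_shape_def monotone_on_def)
    then show thesis by (rule that)
  next
    case False
    obtain m where m: "m \<in> {t<..<length p}"
      and suffix_min: "\<And>i. i \<in> {t<..<length p} \<Longrightarrow> p ! m \<le> p ! i"
      using ex_is_arg_min_if_finite[of "{t<..<length p}" "(!) p"] False assms(5)
      by (fastforce simp: is_arg_min_linorder)
    have run2: "strict_antimono_on {t<..m} ((!) p)"
      using avoids_231_strict_antimono_up_to_min[OF avoids(3) assms(4), of m "Suc t"] m suffix_min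
      by (simp add: atLeastSucAtMost_greaterThanAtMost)
    have run3: "strict_mono_on {m..<length p} ((!) p)"
      using avoids_1243_strict_mono_from_min[OF avoids(1) assms(4), of t m] m suffix_min min_strict
      by auto
    have bridge: "p ! (t + 1) < p ! (t - 1)" if "0 < t" "t + 2 \<le> m"
    proof -
      have "p ! m < p ! (t + 1)"
        using monotone_onD[OF run2, of "t + 1" m] that by auto
      then show ?thesis
        using avoids_231_2143_second_descent_below[OF avoids(3,2) assms(4), of "t - 1" t "t + 1" m]
          min_strict m that by auto
    qed
    have "dec_dec_inc_shape p t m"
      unfolding dec_dec_inc_shape_def using m run1 run2 run3 bridge by auto
    then show thesis by (rule that)
  qed
qed

lemma avoids_iff_dec_dec_inc_shape:
  assumes "distinct p" "t < length p" "\<And>i. i < length p \<Longrightarrow> p ! t \<le> p ! i"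
  shows "avoids p [1,2,4,3] \<and> avoids p [2,1,4,3] \<and> avoids p [2,3,1] \<longleftrightarrow>
    (\<exists>m. dec_dec_inc_shape p t m)"
  using avoids_imp_dec_dec_inc_shape[OF _ _ _ assms] dec_dec_inc_shape_avoids_1243
    dec_dec_inc_shape_avoids_2143[OF _ assms(3)] dec_dec_inc_shape_avoids_231[OF _ assms(3)]
  by metis

lemma Suc_mem_descents_iff: "Suc k < length p \<Longrightarrow> Suc k \<in> descents p \<longleftrightarrow> p ! Suc k < p ! k"
  by (auto simp: descents_def)

lemma descents_subset: "descents p \<subseteq> {1..<length p}"
  by (auto simp: descents_def)

lemma min_position_mem_descents:
  assumes "distinct p" "t < length p" "0 < t" "\<And>i. i < length p \<Longrightarrow> p ! t \<le> p ! i"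
  shows "t \<in> descents p"
proof -
  have "p ! t \<noteq> p ! (t - 1)"
    using nth_eq_iff_index_eq[of p t "t - 1"] assms(1-3) by auto
  then show ?thesis
    using Suc_mem_descents_iff[of "t - 1" p] assms(2,3) assms(4)[of "t - 1"]
    by (simp add: order_le_less)
qed

lemma descents_eq_iff_steps:
  assumes "t \<le> m" "m < length p"
  shows "descents p = {1..t} \<union> {t+2..m} \<longleftrightarrow>
    (\<forall>k. Suc k < length p \<longrightarrow> (p ! Suc k < p ! k \<longleftrightarrow> k < t \<or> t < k \<and> k < m))"
proof -
  have eq_iff: "A = B \<longleftrightarrow> (\<forall>k. Suc k < length p \<longrightarrow> (Suc k \<in> A \<longleftrightarrow> Suc k \<in> B))"
    if "A \<subseteq> {1..<length p}" "B \<subseteq> {1..<length p}" for A B :: "nat set"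
    using that by (auto simp: subset_iff) (metis Suc_pred One_nat_def Suc_le_eq)+
  have "{1..t} \<union> {t+2..m} \<subseteq> {1..<length p}"
    using assms by auto
  from eq_iff[OF descents_subset this] show ?thesis
    by (auto simp: Suc_mem_descents_iff Suc_le_eq)
qed

lemma dec_dec_inc_shape_iff_descents:
  assumes "distinct p" "t < length p" and min: "\<And>i. i < length p \<Longrightarrow> p ! t \<le> p ! i"
  shows "dec_dec_inc_shape p t m \<longleftrightarrow> t \<le> m \<and> m < length p
    \<and> descents p = {1..t} \<union> {t+2..m}
    \<and> (0 < t \<and> t + 2 \<le> m \<longrightarrow> p ! (t + 1) < p ! (t - 1))"
proof -
  have ascent_iff: "p ! k < p ! Suc k \<longleftrightarrow> \<not> p ! Suc k < p ! k" if "Suc k < length p" for k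
    using nth_eq_iff_index_eq[of p k "Suc k"] assms(1) that by auto
  have no_descent_after_min: "\<not> p ! Suc t < p ! t" if "Suc t < length p"
    using min[OF that] by simp
  have "(\<forall>k < t. p ! Suc k < p ! k)
      \<and> (\<forall>k. t < k \<and> k < m \<longrightarrow> p ! Suc k < p ! k)
      \<and> (\<forall>k. m \<le> k \<and> Suc k < length p \<longrightarrow> p ! k < p ! Suc k)
    \<longleftrightarrow> (\<forall>k. Suc k < length p \<longrightarrow> (p ! Suc k < p ! k \<longleftrightarrow> k < t \<or> t < k \<and> k < m))"
    (is "?runs \<longleftrightarrow> ?steps") if "t \<le> m" "m < length p"
  proof
    assume ?runs
    show ?steps
    proof (intro allI impI)
      fix k assume "Suc k < length p"
      consider "k < t" | "k = t" | "t < k \<and> k < m" | "m \<le> k" by linarith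
      then show "p ! Suc k < p ! k \<longleftrightarrow> k < t \<or> t < k \<and> k < m"
        using \<open>?runs\<close> \<open>Suc k < length p\<close> ascent_iff no_descent_after_min by cases auto
    qed
  next
    assume steps: ?steps
    have "p ! Suc k < p ! k" if "k < t" for k
      using steps \<open>t \<le> m\<close> \<open>m < length p\<close> that by simp
    moreover have "p ! Suc k < p ! k" if "t < k" "k < m" for k
      using steps \<open>m < length p\<close> that by simp
    moreover have "p ! k < p ! Suc k" if "m \<le> k" "Suc k < length p" for k
      using steps ascent_iff \<open>t \<le> m\<close> that by simp
    ultimately show ?runs
      by blast
  qed
  then show ?thesis
    unfolding dec_dec_inc_shape_iff_steps using descents_eq_iff_steps[of t m p] by blast
qed

lemma card_two_intervals: "t + 2 \<le> m \<Longrightarrow> card ({1..t} \<union> {t+2..m}) = m - 1"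
  by (subst card_Un_disjoint) auto

lemma descent_set_forms_iff:
  fixes D :: "nat set"
  assumes "D \<subseteq> {1..<n}" "t < n" "0 < t \<Longrightarrow> t \<in> D"
  shows "(\<exists>m. t \<le> m \<and> m < n \<and> D = {1..t} \<union> {t+2..m} \<and> (0 < t \<and> t + 2 \<le> m \<longrightarrow> P)) \<longleftrightarrow>
    (Suc t > card D \<and> D = {1..card D})
    \<or> (Suc t \<le> card D \<and> D = {1..t} \<union> {t+2..card D + 1} \<and> (0 < t \<and> Suc t < n \<longrightarrow> P))"
proof -
  \<comment> \<open>Naming card D keeps the simplifier from looping on D = {1..card D}.\<close>
  define d where "d = card D"
  have "(\<exists>m. t \<le> m \<and> m < n \<and> D = {1..t} \<union> {t+2..m} \<and> (0 < t \<and> t + 2 \<le> m \<longrightarrow> P)) \<longleftrightarrow>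
    (Suc t > d \<and> D = {1..d}) \<or> (Suc t \<le> d \<and> D = {1..t} \<union> {t+2..d + 1} \<and> (0 < t \<and> Suc t < n \<longrightarrow> P))"
    (is "?shape \<longleftrightarrow> ?short \<or> ?long")
  proof
    assume ?shape
    then obtain m where m: "t \<le> m" "m < n" "0 < t \<and> t + 2 \<le> m \<longrightarrow> P"
      and D_eq: "D = {1..t} \<union> {t+2..m}"
      by blast
    show "?short \<or> ?long"
    proof (cases "t + 2 \<le> m")
      case True
      then have "d + 1 = m"
        unfolding d_def D_eq using card_two_intervals by simp
      then have ?long
        using True m D_eq by auto
      then show ?thesis ..
    next
      case False
      then have "D = {1..t}"
        unfolding D_eq by auto
      then have ?short
        unfolding d_def by simp
      then show ?thesis ..
    qed
  next
    assume "?short \<or> ?long"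
    then show ?shape
    proof
      assume short: ?short
      have "d = t"
      proof (cases "t = 0")
        case False
        then have "t \<in> {1..d}"
          using assms(3) short by auto
        then show ?thesis
          using short by simp
      qed (use short in simp)
      with short assms(2) show ?shape
        by (intro exI[of _ t]) auto
    next
      assume long: ?long
      then have "d + 1 \<in> D"
        by auto
      then have "d + 1 < n"
        using assms(1) by auto
      with long show ?shape
        by (intro exI[of _ "d + 1"]) auto
    qed
  qed
  then show ?thesis
    unfolding d_def .
qed

theorem corollary3p13:
  fixes n s :: nat and p :: "nat list"
  assumes "is_perm n p"
    and "1 \<le> s" and "s \<le> n" and "p ! (s - 1) = 1"
  shows "(avoids p [1,2,4,3] \<and> avoids p [2,1,4,3] \<and> avoids p [2,3,1]) \<longleftrightarrow>
     ((s > card (descents p) \<and> descents p = {1..card (descents p)})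
      \<or> (s \<le> card (descents p)
         \<and> descents p = {1..s-1} \<union> {s+1..card (descents p) + 1}
         \<and> (1 < s \<and> s < n \<longrightarrow> p ! (s - 2) > p ! s)))"
proof -
  define t where "t = s - 1"
  have perm: "length p = n" "distinct p" "set p = {1..n}"
    using assms(1) unfolding is_perm_def by auto
  have s: "s = Suc t" and t: "t < length p"
    using assms(2,3) perm(1) unfolding t_def by auto
  have min: "p ! t \<le> p ! i" if "i < length p" for i
    using assms(4) nth_mem[OF that] perm(3) unfolding t_def by auto
  have avoids_iff: "(avoids p [1,2,4,3] \<and> avoids p [2,1,4,3] \<and> avoids p [2,3,1]) \<longleftrightarrow>
      (\<exists>m. t \<le> m \<and> m < n \<and> descents p = {1..t} \<union> {t+2..m}
        \<and> (0 < t \<and> t + 2 \<le> m \<longrightarrow> p ! (t + 1) < p ! (t - 1)))"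
    using avoids_iff_dec_dec_inc_shape[OF perm(2) t min]
      dec_dec_inc_shape_iff_descents[OF perm(2) t min] perm(1) by simp
  have "0 < t \<Longrightarrow> t \<in> descents p"
    using min_position_mem_descents[OF perm(2) t _ min] .
  then show ?thesis
    unfolding avoids_iff
    using descent_set_forms_iff[of "descents p" n t] descents_subset[of p] perm(1) t
    by (simp add: s numeral_2_eq_2)
qed

end
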